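(* Let $\mathbf X_1,\dots,\mathbf X_n$ be i.i.d. copies of $\mathbf X\in\mathbb R^d$ with $K_{\mathbf X}=\sup_j\|X_j\|_{\psi_2}<\infty$, $\boldsymbol\Sigma_{\mathbf X}=\mathbb E\mathbf X\mathbf X^T$, $\boldsymbol\Sigma_n=n^{-1}\sum_i\mathbf X_i\mathbf X_i^T$, and let $\bar c$ be the universal constant for which $\mathbb P(\|\boldsymbol\Sigma_n-\boldsymbol\Sigma_{\mathbf X}\|_{\max}>4A_XK_{\mathbf X}^2\sqrt{\log d/n})\le2d^{2-\bar cA_X^2}$ for every constant $A_X>0$ with $A_X\sqrt{\log d/n}\le1$. Fix such an $A_X$ and $0<\kappa<1$. Assume $\lambda_{\min}(\boldsymbol\Sigma_{\mathbf X})>\delta>0$, $s_{\mathbf v}\sqrt{\log d/n}\le(1-\kappa)\frac{\lambda_{\min}(\boldsymbol\Sigma_{\mathbf X})}{(1+1)^2\,4A_XK_{\mathbf X}^2}$ and $\lambda'\ge\|\mathbf v^*\|_14A_XK_{\mathbf X}^2\sqrt{\log d/n}$. Then with probability at least $1-2d^{2-\bar cA_X^2}$, $\|\hat{\mathbf v}-\mathbf v^*\|_1\le\frac{8\lambda's_{\mathbf v}}{\mathrm{RE}_\kappa(s_{\mathbf v},1)}$; additionally $\|\hat{\mathbf v}_{S_{\mathbf v}^c}-\mathbf v^*_{S_{\mathbf v}^c}\|_1\le\|\hat{\mathbf v}_{S_{\mathbf v}}-\mathbf v^*_{S_{\mathbf v}}\|_1$.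
   Context: $\mathbf v^*=\boldsymbol\Sigma_{\mathbf X}^{-1}\mathbf e_1^T$, $S_{\mathbf v}=\mathrm{supp}(\mathbf v^* )$, $s_{\mathbf v}=|S_{\mathbf v}|$. $\hat{\mathbf v}=\arg\min\|\mathbf v\|_1$ subject to $\|\mathbf v^T\boldsymbol\Sigma_n-\mathbf e_1\|_\infty\le\lambda'$, with $\mathbf e_1=(1,0,\dots,0)$. For a vector $\mathbf u$ and index set $S$, $\mathbf u_S$ is the subvector on $S$. Restricted eigenvalue: for symmetric positive semidefinite $\mathbf M\in\mathbb R^{d\times d}$, $\mathrm{RE}_{\mathbf M}(s,\xi)=\min_{|S|\le s}\min\{\mathbf u^T\mathbf M\mathbf u/\|\mathbf u_S\|_2^2:\mathbf u\ne0,\|\mathbf u_{S^c}\|_1\le\xi\|\mathbf u_S\|_1\}$, and $\mathrm{RE}_\kappa(s,\xi)=\kappa\,\mathrm{RE}_{\boldsymbol\Sigma_{\mathbf X}}(s,\xi)$. $\|X\|_{\psi_2}=\sup_{p\ge1}p^{-1/2}(\mathbb E|X|^p)^{1/p}$. *)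

theory Defs
  imports "HOL-Probability.Probability"
begin

text \<open>Conventions: vectors in R^d are functions nat => real, coordinates 0..d-1
  (coordinate 0 plays the role of the first coordinate e_1); d x d matrices are
  functions nat => nat => real with indices below d.\<close>

definition e1 :: "nat \<Rightarrow> real" where
  "e1 k = (if k = 0 then 1 else 0)"

definition l1norm :: "nat \<Rightarrow> (nat \<Rightarrow> real) \<Rightarrow> real" where
  "l1norm d v = (\<Sum>k<d. \<bar>v k\<bar>)"

definition supvec :: "nat \<Rightarrow> (nat \<Rightarrow> real) \<Rightarrow> bool" where
  "supvec d v \<longleftrightarrow> (\<forall>k\<ge>d. v k = 0)"

definition max_norm :: "nat \<Rightarrow> (nat \<Rightarrow> nat \<Rightarrow> real) \<Rightarrow> real" where
  "max_norm d A = Max ({\<bar>A k l\<bar> | k l. k < d \<and> l < d} \<union> {0})"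

definition mat_inv :: "nat \<Rightarrow> (nat \<Rightarrow> nat \<Rightarrow> real) \<Rightarrow> (nat \<Rightarrow> nat \<Rightarrow> real)" where
  "mat_inv d A = (THE B.
      (\<forall>i<d. \<forall>j<d. (\<Sum>k<d. A i k * B k j) = (if i = j then 1 else 0)) \<and>
      (\<forall>i<d. \<forall>j<d. (\<Sum>k<d. B i k * A k j) = (if i = j then 1 else 0)) \<and>
      (\<forall>i j. \<not> (i < d \<and> j < d) \<longrightarrow> B i j = 0))"

definition mat_eigenvalues :: "nat \<Rightarrow> (nat \<Rightarrow> nat \<Rightarrow> real) \<Rightarrow> real set" where
  "mat_eigenvalues d A = {\<mu>. \<exists>v. (\<exists>j<d. v j \<noteq> 0) \<and>
      (\<forall>k<d. (\<Sum>l<d. A k l * v l) = \<mu> * v k)}"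

definition lambda_min :: "nat \<Rightarrow> (nat \<Rightarrow> nat \<Rightarrow> real) \<Rightarrow> real" where
  "lambda_min d A = Min (mat_eigenvalues d A)"

definition quad_form :: "nat \<Rightarrow> (nat \<Rightarrow> nat \<Rightarrow> real) \<Rightarrow> (nat \<Rightarrow> real) \<Rightarrow> real" where
  "quad_form d A u = (\<Sum>k<d. \<Sum>l<d. u k * A k l * u l)"

definition RE :: "nat \<Rightarrow> (nat \<Rightarrow> nat \<Rightarrow> real) \<Rightarrow> nat \<Rightarrow> real \<Rightarrow> real" where
  "RE d A s \<xi> = Inf {quad_form d A u / (\<Sum>k\<in>S. (u k)\<^sup>2) | S u.
      S \<subseteq> {..<d} \<and> card S \<le> s \<and> supvec d u \<and> (\<exists>k<d. u k \<noteq> 0) \<and>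
      (\<Sum>k\<in>{..<d} - S. \<bar>u k\<bar>) \<le> \<xi> * (\<Sum>k\<in>S. \<bar>u k\<bar>)}"

definition psi2_norm :: "'a measure \<Rightarrow> ('a \<Rightarrow> real) \<Rightarrow> ereal" where
  "psi2_norm M Y = (if \<forall>p\<ge>1. integrable M (\<lambda>x. \<bar>Y x\<bar> powr p)
     then (SUP p\<in>{1::real..}. ereal (p powr (-1/2) *
             (integral\<^sup>L M (\<lambda>x. \<bar>Y x\<bar> powr p)) powr (1/p)))
     else \<infinity>)"

definition sample_cov :: "nat \<Rightarrow> (nat \<Rightarrow> nat \<Rightarrow> 'a \<Rightarrow> real) \<Rightarrow> 'a \<Rightarrow> nat \<Rightarrow> nat \<Rightarrow> real" where
  "sample_cov n X \<omega> k l = (1 / real n) * (\<Sum>i<n. X i k \<omega> * X i l \<omega>)"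

definition clime_feasible :: "nat \<Rightarrow> (nat \<Rightarrow> nat \<Rightarrow> real) \<Rightarrow> real \<Rightarrow> (nat \<Rightarrow> real) \<Rightarrow> bool" where
  "clime_feasible d Sn lam v \<longleftrightarrow> supvec d v \<and>
     (\<forall>j<d. \<bar>(\<Sum>k<d. v k * Sn k j) - e1 j\<bar> \<le> lam)"

definition clime_minimizer :: "nat \<Rightarrow> (nat \<Rightarrow> nat \<Rightarrow> real) \<Rightarrow> real \<Rightarrow> (nat \<Rightarrow> real) \<Rightarrow> bool" where
  "clime_minimizer d Sn lam v \<longleftrightarrow> clime_feasible d Sn lam v \<and>
     (\<forall>w. clime_feasible d Sn lam w \<longrightarrow> l1norm d v \<le> l1norm d w)"

end

theory Submission
  imports Defs "Jordan_Normal_Form.Char_Poly"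
begin

text \<open>On the event that all entries of Sigma_n - Sigma_X are at most t in absolute value, whose
  probability is controlled by the hypothesis on cbar, the argument is deterministic. Since
  v*' Sigma_n - e_1 = v*' (Sigma_n - Sigma_X), the true v* is feasible, so the minimiser vhat is no
  longer than v* in l1-norm and the error h = vhat - v* lies in the cone |h_S^c|_1 \<le> |h_S|_1.
  Both vectors being feasible, every entry of h' Sigma_n is at most 2\<lambda>', hence
  h' Sigma_X h \<le> 2\<lambda>' |h|_1 + t |h|_1^2. On the cone the left side is at least
  RE |h_S|_2^2 \<ge> RE |h_S|_1^2 / s, and the sparsity assumption absorbs the t-term into
  (1 - \<kappa>) RE |h_S|_1^2, leaving \<kappa> RE |h_S|_1 \<le> 4\<lambda>' s.
  Positivity of RE and invertibility of Sigma_X rest on the Rayleigh bound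
  u' Sigma_X u \<ge> lambda_min |u|_2^2, which holds because a minimiser of the quadratic form on the
  unit sphere is an eigenvector.\<close>

definition sqnorm :: "nat \<Rightarrow> (nat \<Rightarrow> real) \<Rightarrow> real" where
  "sqnorm d w = (\<Sum>k<d. (w k)\<^sup>2)"

lemma sqnorm_nonneg: "sqnorm d w \<ge> 0"
  unfolding sqnorm_def by (intro sum_nonneg) auto

lemma sqnorm_eq_0D: "sqnorm d w = 0 \<Longrightarrow> k < d \<Longrightarrow> w k = 0"
  unfolding sqnorm_def by (subst (asm) sum_nonneg_eq_0_iff) auto

lemma sqnorm_divide: "sqnorm d (\<lambda>k. w k / c) = sqnorm d w / c\<^sup>2"
  unfolding sqnorm_def by (simp add: sum_divide_distrib power_divide)

lemma sqnorm_restrict: "sqnorm d (\<lambda>k. if k < d then w k else 0) = sqnorm d w"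
  unfolding sqnorm_def by (intro sum.cong refl) auto

lemma sqnorm_add_scaled:
  "sqnorm d (\<lambda>k. u k + c * w k) = sqnorm d u + 2 * c * (\<Sum>k<d. u k * w k) + c\<^sup>2 * sqnorm d w"
proof -
  have "sqnorm d (\<lambda>k. u k + c * w k) = (\<Sum>k<d. (u k)\<^sup>2 + 2 * c * (u k * w k) + c\<^sup>2 * (w k)\<^sup>2)"
    unfolding sqnorm_def by (intro sum.cong refl) (simp add: algebra_simps power2_eq_square)
  thus ?thesis unfolding sqnorm_def by (simp add: sum.distrib sum_distrib_left)
qed

lemma quad_form_eq_sum_mult: "quad_form d A w = (\<Sum>k<d. w k * (\<Sum>l<d. A k l * w l))"
  unfolding quad_form_def by (simp add: sum_distrib_left mult.assoc)

lemma quad_form_eq_0: "(\<And>k. k < d \<Longrightarrow> w k = 0) \<Longrightarrow> quad_form d A w = 0"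
  unfolding quad_form_def by simp

lemma quad_form_divide: "quad_form d A (\<lambda>k. w k / c) = quad_form d A w / c\<^sup>2"
  unfolding quad_form_def by (simp add: sum_divide_distrib power2_eq_square)

lemma quad_form_restrict: "quad_form d A (\<lambda>k. if k < d then w k else 0) = quad_form d A w"
  unfolding quad_form_def by (intro sum.cong refl) auto

lemma quad_form_add_scaled:
  assumes sym: "\<And>k l. A k l = A l k"
  shows "quad_form d A (\<lambda>k. u k + c * w k) = quad_form d A u
     + 2 * c * (\<Sum>k<d. \<Sum>l<d. u k * A k l * w l) + c\<^sup>2 * quad_form d A w"
proof -
  have swap: "(\<Sum>k<d. \<Sum>l<d. w k * A k l * u l) = (\<Sum>k<d. \<Sum>l<d. u k * A k l * w l)"
    by (subst sum.swap) (simp add: sym mult.commute mult.left_commute)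
  have "quad_form d A (\<lambda>k. u k + c * w k) =
     (\<Sum>k<d. \<Sum>l<d. u k * A k l * u l + c * (u k * A k l * w l) + c * (w k * A k l * u l)
        + c\<^sup>2 * (w k * A k l * w l))"
    unfolding quad_form_def by (intro sum.cong refl) (simp add: algebra_simps power2_eq_square)
  also have "\<dots> = quad_form d A u + c * (\<Sum>k<d. \<Sum>l<d. u k * A k l * w l)
      + c * (\<Sum>k<d. \<Sum>l<d. w k * A k l * u l) + c\<^sup>2 * quad_form d A w"
    unfolding quad_form_def by (simp add: sum.distrib sum_distrib_left)
  finally show ?thesis using swap by (simp add: algebra_simps)
qed

lemma linear_coeff_eq_0_if_nonneg:
  fixes \<beta> \<gamma> :: real
  assumes "\<And>t. 2 * t * \<beta> + t\<^sup>2 * \<gamma> \<ge> 0"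
  shows "\<beta> = 0"
proof (rule ccontr)
  assume nz: "\<beta> \<noteq> 0"
  define g where "g = \<bar>\<gamma>\<bar> + 1"
  have g: "g > 0" "\<bar>\<gamma>\<bar> \<le> g" unfolding g_def by auto
  define t where "t = - \<beta> / g"
  have "t\<^sup>2 * \<gamma> \<le> t\<^sup>2 * g"
    using g by (intro mult_left_mono) auto
  also have "\<dots> = \<beta>\<^sup>2 / g" unfolding t_def using g by (simp add: power2_eq_square field_simps)
  finally have quadratic: "t\<^sup>2 * \<gamma> \<le> \<beta>\<^sup>2 / g" .
  have linear: "2 * t * \<beta> = - 2 * (\<beta>\<^sup>2 / g)"
    unfolding t_def using g by (simp add: power2_eq_square field_simps)
  have "\<beta>\<^sup>2 / g > 0" using nz g by simp
  with quadratic linear assms[of t] show False by linarith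
qed

lemma compact_unit_sphere: "compact {u::nat\<Rightarrow>real. (\<forall>k\<ge>d. u k = 0) \<and> sqnorm d u = 1}"
proof -
  define B where "B = (\<lambda>k::nat. if k < d then {-1..1::real} else {0})"
  have box: "compact (PiE UNIV B)"
  proof -
    have "compactin (product_topology (\<lambda>_. euclidean) UNIV) (PiE UNIV B)"
      unfolding compactin_PiE by (auto simp: B_def compactin_euclidean_iff)
    thus ?thesis by (simp add: euclidean_product_topology compactin_euclidean_iff)
  qed
  have "continuous_on UNIV (\<lambda>u::nat\<Rightarrow>real. sqnorm d u)"
    unfolding sqnorm_def by (intro continuous_intros continuous_on_product_coordinates)
  hence sphere: "closed {u::nat\<Rightarrow>real. sqnorm d u = 1}"
    by (rule closed_Collect_eq) (intro continuous_intros)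
  have "{u::nat\<Rightarrow>real. (\<forall>k\<ge>d. u k = 0) \<and> sqnorm d u = 1} = PiE UNIV B \<inter> {u. sqnorm d u = 1}"
  proof (intro equalityI subsetI)
    fix u assume u: "u \<in> {u::nat\<Rightarrow>real. (\<forall>k\<ge>d. u k = 0) \<and> sqnorm d u = 1}"
    have "u k \<in> B k" for k
    proof (cases "k < d")
      case True
      have "(u k)\<^sup>2 \<le> sqnorm d u" unfolding sqnorm_def
        by (rule member_le_sum) (use True in auto)
      with u have "\<bar>u k\<bar> \<le> 1" by (simp add: abs_square_le_1)
      thus ?thesis using True by (auto simp: B_def)
    next
      case False thus ?thesis using u by (auto simp: B_def)
    qed
    thus "u \<in> PiE UNIV B \<inter> {u. sqnorm d u = 1}" using u by auto
  next
    fix u assume "u \<in> PiE UNIV B \<inter> {u. sqnorm d u = 1}"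
    thus "u \<in> {u::nat\<Rightarrow>real. (\<forall>k\<ge>d. u k = 0) \<and> sqnorm d u = 1}"
      by (auto simp: B_def PiE_iff split: if_splits) (meson leD)
  qed
  thus ?thesis using compact_Int_closed[OF box sphere] by simp
qed

lemma quad_form_min_on_unit_sphere:
  assumes "d \<ge> 1"
  obtains u m where "\<forall>k\<ge>d. u k = 0" "sqnorm d u = 1" "quad_form d A u = m"
    "\<And>w. quad_form d A w \<ge> m * sqnorm d w"
proof -
  define T where "T = {u::nat\<Rightarrow>real. (\<forall>k\<ge>d. u k = 0) \<and> sqnorm d u = 1}"
  have "(\<lambda>k. if k = 0 then 1 else 0) \<in> T"
    using assms by (simp add: T_def sqnorm_def if_distrib[of "\<lambda>x. x\<^sup>2"] sum.delta' cong: if_cong)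
  hence "T \<noteq> {}" by auto
  moreover have "continuous_on T (quad_form d A)"
    unfolding quad_form_def
    by (intro continuous_intros continuous_on_subset[OF continuous_on_product_coordinates] subset_UNIV)
  ultimately obtain u where uT: "u \<in> T" and umin: "\<And>v. v \<in> T \<Longrightarrow> quad_form d A u \<le> quad_form d A v"
    using continuous_attains_inf[OF compact_unit_sphere[of d, folded T_def]] by metis
  have "quad_form d A w \<ge> quad_form d A u * sqnorm d w" for w
  proof (cases "sqnorm d w = 0")
    case True
    thus ?thesis by (simp add: quad_form_eq_0 sqnorm_eq_0D)
  next
    case False
    define c where "c = sqrt (sqnorm d w)"
    have pos: "sqnorm d w > 0" using False sqnorm_nonneg[of d w] by simp
    hence c: "c > 0" "c\<^sup>2 = sqnorm d w" unfolding c_def by auto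
    define v where "v = (\<lambda>k. (if k < d then w k else 0) / c)"
    have "v \<in> T" using c False by (simp add: T_def v_def sqnorm_divide sqnorm_restrict)
    hence "quad_form d A u \<le> quad_form d A v" by (rule umin)
    also have "\<dots> = quad_form d A w / sqnorm d w"
      using c by (simp add: v_def quad_form_divide quad_form_restrict)
    finally show ?thesis using pos by (simp add: field_simps)
  qed
  thus ?thesis using that uT unfolding T_def by blast
qed

text \<open>First-order optimality: perturbing the minimiser \<open>u\<close> along \<open>e\<^sub>k\<close> gives a quadratic in
  the step size that is nonnegative, so its linear coefficient \<open>(Au - m u)\<^sub>k\<close> vanishes.\<close>
lemma rayleigh_minimizer_eigenvector:
  assumes sym: "\<And>k l. A k l = A l k" and u: "sqnorm d u = 1" "quad_form d A u = m"
    and min: "\<And>w. quad_form d A w \<ge> m * sqnorm d w" and k: "k < d"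
  shows "(\<Sum>l<d. A k l * u l) = m * u k"
proof -
  define v where "v = (\<lambda>l::nat. if l = k then 1 else (0::real))"
  define \<beta> where "\<beta> = (\<Sum>i<d. \<Sum>l<d. u i * A i l * v l) - m * (\<Sum>i<d. u i * v i)"
  define \<gamma> where "\<gamma> = quad_form d A v - m * sqnorm d v"
  have "2 * t * \<beta> + t\<^sup>2 * \<gamma> \<ge> 0" for t
    using min[of "\<lambda>i. u i + t * v i"] u unfolding \<beta>_def \<gamma>_def
    by (simp add: quad_form_add_scaled[OF sym] sqnorm_add_scaled algebra_simps)
  hence "\<beta> = 0" by (rule linear_coeff_eq_0_if_nonneg)
  moreover have "(\<Sum>i<d. \<Sum>l<d. u i * A i l * v l) = (\<Sum>i<d. u i * A i k)"
    "(\<Sum>i<d. u i * v i) = u k"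
    unfolding v_def using k by (simp_all add: if_distrib[of "\<lambda>x. _ * x"] sum.delta' cong: if_cong)
  ultimately show ?thesis unfolding \<beta>_def by (simp add: sym[of k] mult.commute)
qed

definition to_mat :: "nat \<Rightarrow> (nat \<Rightarrow> nat \<Rightarrow> real) \<Rightarrow> real mat" where
  "to_mat d A = mat d d (\<lambda>(i,j). A i j)"

lemma to_mat_carrier: "to_mat d A \<in> carrier_mat d d"
  unfolding to_mat_def by simp

lemma to_mat_mult_vec:
  assumes "i < d" "dim_vec v = d"
  shows "(to_mat d A *\<^sub>v v) $ i = (\<Sum>l<d. A i l * v $ l)"
  using assms to_mat_carrier[of d A]
  by (simp add: scalar_prod_def lessThan_atLeast0 to_mat_def)

lemma to_mat_mult_left:
  assumes "i < d" "j < d" "B \<in> carrier_mat d d"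
  shows "(to_mat d A * B) $$ (i,j) = (\<Sum>k<d. A i k * B $$ (k,j))"
  using assms to_mat_carrier[of d A]
  by (simp add: scalar_prod_def lessThan_atLeast0 to_mat_def)

lemma to_mat_mult_right:
  assumes "i < d" "j < d" "B \<in> carrier_mat d d"
  shows "(B * to_mat d A) $$ (i,j) = (\<Sum>k<d. B $$ (i,k) * A k j)"
  using assms to_mat_carrier[of d A]
  by (simp add: scalar_prod_def lessThan_atLeast0 to_mat_def)

lemma mat_eigenvalues_subset_roots:
  "mat_eigenvalues d A \<subseteq> {x. poly (char_poly (to_mat d A)) x = 0}"
proof
  fix \<mu> assume "\<mu> \<in> mat_eigenvalues d A"
  then obtain v where v: "\<exists>j<d. v j \<noteq> 0" "\<forall>k<d. (\<Sum>l<d. A k l * v l) = \<mu> * v k"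
    unfolding mat_eigenvalues_def by auto
  have "vec d v \<noteq> 0\<^sub>v d"
    using v(1) by (metis index_vec index_zero_vec(1))
  moreover have "to_mat d A *\<^sub>v vec d v = \<mu> \<cdot>\<^sub>v vec d v"
  proof (rule eq_vecI)
    fix i assume "i < dim_vec (\<mu> \<cdot>\<^sub>v vec d v)"
    hence "i < d" by simp
    hence "(to_mat d A *\<^sub>v vec d v) $ i = (\<Sum>l<d. A i l * v l)"
      by (simp add: to_mat_mult_vec)
    thus "(to_mat d A *\<^sub>v vec d v) $ i = (\<mu> \<cdot>\<^sub>v vec d v) $ i" using v(2) \<open>i < d\<close> by simp
  qed (simp add: to_mat_def)
  ultimately have "eigenvector (to_mat d A) (vec d v) \<mu>"
    unfolding eigenvector_def by (auto simp: to_mat_def)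
  hence "eigenvalue (to_mat d A) \<mu>" unfolding eigenvalue_def by blast
  thus "\<mu> \<in> {x. poly (char_poly (to_mat d A)) x = 0}"
    using eigenvalue_root_char_poly[OF to_mat_carrier] by auto
qed

lemma finite_mat_eigenvalues: "finite (mat_eigenvalues d A)"
proof -
  have "char_poly (to_mat d A) \<noteq> 0"
    using degree_monic_char_poly[OF to_mat_carrier[of d A]] by auto
  thus ?thesis using mat_eigenvalues_subset_roots poly_roots_finite finite_subset by blast
qed

lemma quad_form_ge_lambda_min:
  assumes sym: "\<And>k l. A k l = A l k" and "d \<ge> 1"
  shows "quad_form d A w \<ge> lambda_min d A * sqnorm d w"
proof -
  obtain u m where u: "sqnorm d u = 1" "quad_form d A u = m"
    and min: "\<And>w. quad_form d A w \<ge> m * sqnorm d w"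
    using quad_form_min_on_unit_sphere[OF \<open>d \<ge> 1\<close>] by metis
  have "\<exists>j<d. u j \<noteq> 0"
  proof (rule ccontr)
    assume "\<not> ?thesis"
    hence "sqnorm d u = 0" unfolding sqnorm_def by simp
    with u(1) show False by simp
  qed
  hence "m \<in> mat_eigenvalues d A"
    unfolding mat_eigenvalues_def using rayleigh_minimizer_eigenvector[OF sym u min] by blast
  hence "lambda_min d A \<le> m"
    unfolding lambda_min_def by (rule Min_le[OF finite_mat_eigenvalues])
  hence "lambda_min d A * sqnorm d w \<le> m * sqnorm d w"
    using sqnorm_nonneg by (rule mult_right_mono)
  thus ?thesis using min[of w] by linarith
qed

definition is_mat_inv :: "nat \<Rightarrow> (nat \<Rightarrow> nat \<Rightarrow> real) \<Rightarrow> (nat \<Rightarrow> nat \<Rightarrow> real) \<Rightarrow> bool" where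
  "is_mat_inv d A B \<longleftrightarrow>
      (\<forall>i<d. \<forall>j<d. (\<Sum>k<d. A i k * B k j) = (if i = j then 1 else 0)) \<and>
      (\<forall>i<d. \<forall>j<d. (\<Sum>k<d. B i k * A k j) = (if i = j then 1 else 0)) \<and>
      (\<forall>i j. \<not> (i < d \<and> j < d) \<longrightarrow> B i j = 0)"

lemma is_mat_inv_unique:
  assumes "is_mat_inv d A B" "is_mat_inv d A B'"
  shows "B' = B"
proof (intro ext)
  fix i j
  show "B' i j = B i j"
  proof (cases "i < d \<and> j < d")
    case False thus ?thesis using assms unfolding is_mat_inv_def by auto
  next
    case True
    have "B' i j = (\<Sum>k<d. (if i = k then 1 else 0) * B' k j)"
      using True by (simp add: if_distrib[of "\<lambda>x. x * _"] sum.delta cong: if_cong)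
    also have "\<dots> = (\<Sum>k<d. (\<Sum>m<d. B i m * A m k) * B' k j)"
      using True assms(1) unfolding is_mat_inv_def by (intro sum.cong refl) auto
    also have "\<dots> = (\<Sum>m<d. B i m * (\<Sum>k<d. A m k * B' k j))"
      by (simp add: sum_distrib_left sum_distrib_right mult.assoc) (rule sum.swap)
    also have "\<dots> = (\<Sum>m<d. B i m * (if m = j then 1 else 0))"
      using True assms(2) unfolding is_mat_inv_def by (intro sum.cong refl) auto
    also have "\<dots> = B i j"
      using True by (simp add: if_distrib[of "\<lambda>x. _ * x"] sum.delta' cong: if_cong)
    finally show ?thesis .
  qed
qed

lemma is_mat_inv_mat_inv:
  assumes "is_mat_inv d A B"
  shows "is_mat_inv d A (mat_inv d A)"
proof -
  have "mat_inv d A = B"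
    unfolding mat_inv_def is_mat_inv_def[symmetric]
    using assms is_mat_inv_unique[OF assms] by (rule the_equality)
  thus ?thesis using assms by simp
qed

lemma det_to_mat_nonzero_if_pos_def:
  assumes pd: "\<And>w. quad_form d A w \<ge> c * sqnorm d w" and "c > 0"
  shows "det (to_mat d A) \<noteq> 0"
proof
  assume "det (to_mat d A) = 0"
  then obtain v where v: "v \<in> carrier_vec d" "v \<noteq> 0\<^sub>v d" "to_mat d A *\<^sub>v v = 0\<^sub>v d"
    using det_0_iff_vec_prod_zero_field[OF to_mat_carrier] by auto
  define w where "w = (\<lambda>k. if k < d then v $ k else 0)"
  have "(\<Sum>l<d. A k l * w l) = 0" if "k < d" for k
    using that v(1) arg_cong[OF v(3), of "\<lambda>x. x $ k"]
    by (simp add: to_mat_mult_vec w_def)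
  hence "quad_form d A w = 0" unfolding quad_form_eq_sum_mult by simp
  moreover obtain j where "j < d" "v $ j \<noteq> 0"
    using v(1,2) by (metis eq_vecI carrier_vecD index_zero_vec)
  hence "sqnorm d w \<noteq> 0" using sqnorm_eq_0D[of d w j] by (auto simp: w_def)
  hence "sqnorm d w > 0" using sqnorm_nonneg[of d w] by linarith
  ultimately show False using pd[of w] mult_pos_pos[OF \<open>c > 0\<close>] by fastforce
qed

lemma is_mat_inv_if_det_nonzero:
  assumes "det (to_mat d A) \<noteq> 0"
  shows "is_mat_inv d A (mat_inv d A)"
proof -
  obtain B where B: "B \<in> carrier_mat d d" and BA: "B * to_mat d A = 1\<^sub>m d"
    and AB: "to_mat d A * B = 1\<^sub>m d"
    using det_non_zero_imp_unit[OF to_mat_carrier assms, unfolded Units_def, of "()"]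
    by (auto simp: ring_mat_def)
  define B' where "B' = (\<lambda>i j. if i < d \<and> j < d then B $$ (i,j) else 0)"
  have "is_mat_inv d A B'" unfolding is_mat_inv_def
  proof (intro conjI allI impI)
    fix i j assume ij: "i < d" "j < d"
    have "(\<Sum>k<d. A i k * B' k j) = (to_mat d A * B) $$ (i,j)"
      using ij B by (simp add: to_mat_mult_left B'_def)
    thus "(\<Sum>k<d. A i k * B' k j) = (if i = j then 1 else 0)" using AB ij by simp
    have "(\<Sum>k<d. B' i k * A k j) = (B * to_mat d A) $$ (i,j)"
      using ij B by (simp add: to_mat_mult_right B'_def)
    thus "(\<Sum>k<d. B' i k * A k j) = (if i = j then 1 else 0)" using BA ij B by simp
  qed (auto simp: B'_def)
  thus ?thesis by (rule is_mat_inv_mat_inv)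
qed

lemma RE_quotient_ge:
  assumes ray: "\<And>w. quad_form d A w \<ge> c * sqnorm d w" and "c > 0"
    and S: "S \<subseteq> {..<d}" and nz: "\<exists>k<d. u k \<noteq> 0"
    and cone: "(\<Sum>k\<in>{..<d} - S. \<bar>u k\<bar>) \<le> \<xi> * (\<Sum>k\<in>S. \<bar>u k\<bar>)"
  shows "(\<Sum>k\<in>S. (u k)\<^sup>2) > 0" "c \<le> quad_form d A u / (\<Sum>k\<in>S. (u k)\<^sup>2)"
proof -
  have fin: "finite S" using S finite_subset by blast
  show pos: "(\<Sum>k\<in>S. (u k)\<^sup>2) > 0"
  proof (rule ccontr)
    assume "\<not> ?thesis"
    hence "(\<Sum>k\<in>S. (u k)\<^sup>2) = 0" using sum_nonneg[of S "\<lambda>k. (u k)\<^sup>2"] by simp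
    hence "\<forall>k\<in>S. u k = 0" using fin by (subst (asm) sum_nonneg_eq_0_iff) auto
    hence "(\<Sum>k\<in>{..<d} - S. \<bar>u k\<bar>) \<le> 0" using cone by simp
    hence "(\<Sum>k\<in>{..<d} - S. \<bar>u k\<bar>) = 0" by (rule antisym) (auto intro: sum_nonneg)
    hence "\<forall>k\<in>{..<d} - S. u k = 0" by (subst (asm) sum_nonneg_eq_0_iff) auto
    with \<open>\<forall>k\<in>S. u k = 0\<close> nz show False by auto
  qed
  have "(\<Sum>k\<in>S. (u k)\<^sup>2) \<le> sqnorm d u"
    unfolding sqnorm_def using S by (intro sum_mono2) auto
  hence "c * (\<Sum>k\<in>S. (u k)\<^sup>2) \<le> quad_form d A u"
    using ray[of u] \<open>c > 0\<close> by (meson mult_left_mono less_imp_le order_trans)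
  thus "c \<le> quad_form d A u / (\<Sum>k\<in>S. (u k)\<^sup>2)" using pos by (simp add: pos_le_divide_eq)
qed

lemma RE_ge:
  assumes ray: "\<And>w. quad_form d A w \<ge> c * sqnorm d w" and "c > 0"
    and "s \<ge> 1" "d \<ge> 1" "\<xi> \<ge> 0"
  shows "c \<le> RE d A s \<xi>"
  unfolding RE_def
proof (rule cInf_greatest)
  let ?e = "\<lambda>k::nat. if k = 0 then 1 else (0::real)"
  have "quad_form d A ?e / (\<Sum>k\<in>{0}. (?e k)\<^sup>2) \<in> {quad_form d A u / (\<Sum>k\<in>S. (u k)\<^sup>2) | S u.
      S \<subseteq> {..<d} \<and> card S \<le> s \<and> supvec d u \<and> (\<exists>k<d. u k \<noteq> 0) \<and>
      (\<Sum>k\<in>{..<d} - S. \<bar>u k\<bar>) \<le> \<xi> * (\<Sum>k\<in>S. \<bar>u k\<bar>)}"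
    using assms by (intro CollectI exI[of _ "{0}"] exI[of _ ?e]) (auto simp: supvec_def)
  thus "{quad_form d A u / (\<Sum>k\<in>S. (u k)\<^sup>2) | S u.
      S \<subseteq> {..<d} \<and> card S \<le> s \<and> supvec d u \<and> (\<exists>k<d. u k \<noteq> 0) \<and>
      (\<Sum>k\<in>{..<d} - S. \<bar>u k\<bar>) \<le> \<xi> * (\<Sum>k\<in>S. \<bar>u k\<bar>)} \<noteq> {}" by blast
qed (use RE_quotient_ge(2)[OF ray \<open>c > 0\<close>] in blast)

lemma RE_mult_le_quad_form:
  assumes ray: "\<And>w. quad_form d A w \<ge> c * sqnorm d w" and "c > 0"
    and S: "S \<subseteq> {..<d}" "card S \<le> s" and u: "supvec d u"
    and cone: "(\<Sum>k\<in>{..<d} - S. \<bar>u k\<bar>) \<le> \<xi> * (\<Sum>k\<in>S. \<bar>u k\<bar>)"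
  shows "RE d A s \<xi> * (\<Sum>k\<in>S. (u k)\<^sup>2) \<le> quad_form d A u"
proof (cases "\<exists>k<d. u k \<noteq> 0")
  case False
  hence "(\<Sum>k\<in>S. (u k)\<^sup>2) = 0" "quad_form d A u = 0"
    using S(1) by (auto intro!: sum.neutral quad_form_eq_0)
  thus ?thesis by simp
next
  case True
  note quotient_ge = RE_quotient_ge[OF ray \<open>c > 0\<close>]
  have "RE d A s \<xi> \<le> quad_form d A u / (\<Sum>k\<in>S. (u k)\<^sup>2)"
    unfolding RE_def
    by (rule cInf_lower; (rule bdd_belowI[where m = c])?; use S u True cone quotient_ge(2) in blast)
  thus ?thesis using quotient_ge(1)[OF S(1) True cone] by (simp add: le_divide_eq)
qed

lemma l1norm_nonneg: "l1norm d v \<ge> 0"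
  unfolding l1norm_def by (intro sum_nonneg) auto

lemma l1norm_split:
  assumes "S \<subseteq> {..<d}"
  shows "l1norm d v = (\<Sum>k\<in>S. \<bar>v k\<bar>) + (\<Sum>k\<in>{..<d} - S. \<bar>v k\<bar>)"
  unfolding l1norm_def by (subst sum.subset_diff[OF assms]) (auto simp: add.commute)

lemma l1_error_cone:
  assumes S: "S \<subseteq> {..<d}" and supp: "\<And>k. k \<in> {..<d} - S \<Longrightarrow> v k = 0"
    and le: "l1norm d w \<le> l1norm d v"
  shows "(\<Sum>k\<in>{..<d} - S. \<bar>w k - v k\<bar>) \<le> (\<Sum>k\<in>S. \<bar>w k - v k\<bar>)"
proof -
  have "(\<Sum>k\<in>S. \<bar>v k\<bar> - \<bar>w k - v k\<bar>) \<le> (\<Sum>k\<in>S. \<bar>w k\<bar>)"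
    by (rule sum_mono) arith
  moreover have "(\<Sum>k\<in>{..<d} - S. \<bar>w k - v k\<bar>) = (\<Sum>k\<in>{..<d} - S. \<bar>w k\<bar>)"
    "(\<Sum>k\<in>{..<d} - S. \<bar>v k\<bar>) = 0"
    using supp by simp_all
  ultimately show ?thesis
    using le l1norm_split[OF S, of w] l1norm_split[OF S, of v] by (simp add: sum_subtractf)
qed

lemma clime_feasible_if_close:
  assumes inv: "\<And>j. j < d \<Longrightarrow> (\<Sum>k<d. v k * A k j) = e1 j" and v: "supvec d v"
    and close: "\<And>k l. k < d \<Longrightarrow> l < d \<Longrightarrow> \<bar>Sn k l - A k l\<bar> \<le> t"
    and lam: "lam \<ge> l1norm d v * t"
  shows "clime_feasible d Sn lam v"
  unfolding clime_feasible_def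
proof (intro conjI allI impI v)
  fix j assume j: "j < d"
  have "(\<Sum>k<d. v k * Sn k j) - e1 j = (\<Sum>k<d. v k * (Sn k j - A k j))"
    using inv[OF j] by (simp add: right_diff_distrib sum_subtractf)
  also have "\<bar>\<dots>\<bar> \<le> (\<Sum>k<d. \<bar>v k\<bar> * t)"
    using close j by (intro order_trans[OF sum_abs] sum_mono) (simp add: abs_mult mult_left_mono)
  also have "\<dots> = l1norm d v * t" unfolding l1norm_def by (simp add: sum_distrib_right)
  finally show "\<bar>(\<Sum>k<d. v k * Sn k j) - e1 j\<bar> \<le> lam" using lam by simp
qed

lemma clime_feasible_diff_bound:
  assumes "clime_feasible d Sn lam v" "clime_feasible d Sn lam w" and "j < d"
  shows "\<bar>\<Sum>k<d. (w k - v k) * Sn k j\<bar> \<le> 2 * lam"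
proof -
  have "(\<Sum>k<d. (w k - v k) * Sn k j) = ((\<Sum>k<d. w k * Sn k j) - e1 j) - ((\<Sum>k<d. v k * Sn k j) - e1 j)"
    by (simp add: left_diff_distrib sum_subtractf)
  thus ?thesis using assms unfolding clime_feasible_def by fastforce
qed

lemma quad_form_le_of_close:
  assumes grad: "\<And>j. j < d \<Longrightarrow> \<bar>\<Sum>k<d. h k * Sn k j\<bar> \<le> g"
    and close: "\<And>k l. k < d \<Longrightarrow> l < d \<Longrightarrow> \<bar>Sn k l - A k l\<bar> \<le> t"
  shows "quad_form d A h \<le> g * l1norm d h + t * (l1norm d h)\<^sup>2"
proof -
  have "(\<Sum>k<d. \<Sum>l<d. h k * Sn k l * h l) = (\<Sum>l<d. h l * (\<Sum>k<d. h k * Sn k l))"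
    by (subst sum.swap) (simp add: sum_distrib_left mult.commute mult.left_commute)
  also have "\<dots> \<le> (\<Sum>l<d. \<bar>h l\<bar> * g)"
  proof (rule sum_mono)
    fix l assume "l \<in> {..<d}"
    hence "\<bar>h l\<bar> * \<bar>\<Sum>k<d. h k * Sn k l\<bar> \<le> \<bar>h l\<bar> * g" using grad by (intro mult_left_mono) auto
    thus "h l * (\<Sum>k<d. h k * Sn k l) \<le> \<bar>h l\<bar> * g" by (metis abs_ge_self abs_mult order_trans)
  qed
  also have "\<dots> = g * l1norm d h" unfolding l1norm_def by (simp add: sum_distrib_left mult.commute)
  finally have sample: "(\<Sum>k<d. \<Sum>l<d. h k * Sn k l * h l) \<le> g * l1norm d h" .
  have "\<bar>\<Sum>k<d. \<Sum>l<d. h k * (Sn k l - A k l) * h l\<bar> \<le> (\<Sum>k<d. \<Sum>l<d. \<bar>h k\<bar> * t * \<bar>h l\<bar>)"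
    using close
    by (intro order_trans[OF sum_abs] sum_mono order_trans[OF sum_abs])
       (simp add: abs_mult mult_right_mono mult_left_mono)
  also have "\<dots> = t * (l1norm d h)\<^sup>2" unfolding l1norm_def power2_eq_square
    by (simp add: sum_product sum_distrib_left mult.commute mult.left_commute)
  finally have deviation: "\<bar>\<Sum>k<d. \<Sum>l<d. h k * (Sn k l - A k l) * h l\<bar> \<le> t * (l1norm d h)\<^sup>2" .
  have "quad_form d A h = (\<Sum>k<d. \<Sum>l<d. h k * Sn k l * h l)
      - (\<Sum>k<d. \<Sum>l<d. h k * (Sn k l - A k l) * h l)"
    unfolding quad_form_def by (simp add: sum_subtractf[symmetric] algebra_simps)
  thus ?thesis using sample deviation by linarith
qed

lemma RE_l1_sq_le_quad_form:
  assumes ray: "\<And>w. quad_form d A w \<ge> c * sqnorm d w" and "c > 0"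
    and S: "S \<subseteq> {..<d}" "card S \<le> s" and "s \<ge> 1" "d \<ge> 1" and u: "supvec d u"
    and cone: "(\<Sum>k\<in>{..<d} - S. \<bar>u k\<bar>) \<le> (\<Sum>k\<in>S. \<bar>u k\<bar>)"
  shows "RE d A s 1 * (\<Sum>k\<in>S. \<bar>u k\<bar>)\<^sup>2 \<le> real s * quad_form d A u"
proof -
  have "c \<le> RE d A s 1" by (rule RE_ge[OF ray \<open>c > 0\<close> \<open>s \<ge> 1\<close> \<open>d \<ge> 1\<close>]) simp
  hence RE: "RE d A s 1 \<ge> 0" using \<open>c > 0\<close> by linarith
  have "(\<Sum>k\<in>S. \<bar>u k\<bar>)\<^sup>2 \<le> real (card S) * (\<Sum>k\<in>S. (u k)\<^sup>2)"
    using sum_squared_le_sum_of_squares[of "\<lambda>k. \<bar>u k\<bar>" S] by (simp add: mult.commute)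
  also have "\<dots> \<le> real s * (\<Sum>k\<in>S. (u k)\<^sup>2)"
    using S(2) by (intro mult_right_mono) (auto intro: sum_nonneg)
  finally have "RE d A s 1 * (\<Sum>k\<in>S. \<bar>u k\<bar>)\<^sup>2 \<le> RE d A s 1 * (real s * (\<Sum>k\<in>S. (u k)\<^sup>2))"
    using RE by (rule mult_left_mono)
  also have "\<dots> = real s * (RE d A s 1 * (\<Sum>k\<in>S. (u k)\<^sup>2))" by (rule mult.left_commute)
  also have "\<dots> \<le> real s * quad_form d A u"
    using RE_mult_le_quad_form[OF ray \<open>c > 0\<close> S u] cone by (intro mult_left_mono) auto
  finally show ?thesis .
qed

lemma absorb_quadratic_term:
  fixes a R \<kappa> lam t s :: real
  assumes "R > 0" "0 < \<kappa>" "a \<ge> 0" "lam \<ge> 0" "s \<ge> 0"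
    and absorb: "4 * t * s \<le> (1 - \<kappa>) * R"
    and ineq: "R * a\<^sup>2 \<le> 4 * lam * a * s + 4 * t * s * a\<^sup>2"
  shows "a \<le> 4 * lam * s / (\<kappa> * R)"
proof (cases "a = 0")
  case True thus ?thesis using assms by simp
next
  case False
  have "4 * t * s * a\<^sup>2 \<le> (1 - \<kappa>) * R * a\<^sup>2" using absorb by (intro mult_right_mono) auto
  with ineq have "\<kappa> * R * a * a \<le> 4 * lam * s * a" by (simp add: algebra_simps power2_eq_square)
  hence "\<kappa> * R * a \<le> 4 * lam * s" using False \<open>a \<ge> 0\<close> by simp
  thus ?thesis using assms by (simp add: pos_le_divide_eq mult.commute mult.left_commute)
qed

lemma mat_inv_first_column:
  assumes sym: "\<And>k l. A k l = A l k" and inv: "is_mat_inv d A B" and "d \<ge> 1"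
  shows "\<And>j. j < d \<Longrightarrow> (\<Sum>k<d. B k 0 * A k j) = e1 j" and "supvec d (\<lambda>k. B k 0)"
proof -
  fix j assume "j < d"
  have "(\<Sum>k<d. B k 0 * A k j) = (\<Sum>k<d. A j k * B k 0)"
    by (intro sum.cong refl) (simp add: sym[of _ j])
  thus "(\<Sum>k<d. B k 0 * A k j) = e1 j"
    using inv \<open>j < d\<close> \<open>d \<ge> 1\<close> unfolding is_mat_inv_def by (simp add: e1_def)
next
  show "supvec d (\<lambda>k. B k 0)" using inv unfolding is_mat_inv_def supvec_def by simp
qed

lemma clime_error_bound:
  fixes d s :: nat and A Sn :: "nat \<Rightarrow> nat \<Rightarrow> real" and vstar vhat :: "nat \<Rightarrow> real"
    and t lam \<kappa> :: real and S :: "nat set"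
  assumes sym: "\<And>k l. A k l = A l k" and "d \<ge> 1" and lmin: "lambda_min d A > 0"
    and vstar_def: "vstar = (\<lambda>k. mat_inv d A k 0)"
    and S_def: "S = {k. k < d \<and> vstar k \<noteq> 0}" and s_def: "s = card S"
    and close: "\<And>k l. k < d \<Longrightarrow> l < d \<Longrightarrow> \<bar>Sn k l - A k l\<bar> \<le> t" and "t \<ge> 0"
    and absorb: "4 * t * real s \<le> (1 - \<kappa>) * lambda_min d A" and \<kappa>: "0 < \<kappa>" "\<kappa> < 1"
    and lam: "lam \<ge> l1norm d vstar * t"
    and vhat: "clime_minimizer d Sn lam vhat"
  shows "l1norm d (\<lambda>k. vhat k - vstar k) \<le> 8 * lam * real s / (\<kappa> * RE d A s 1)"
    and "(\<Sum>k\<in>{..<d} - S. \<bar>vhat k - vstar k\<bar>) \<le> (\<Sum>k\<in>S. \<bar>vhat k - vstar k\<bar>)"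
proof -
  note ray = quad_form_ge_lambda_min[OF sym \<open>d \<ge> 1\<close>]
  have inverse: "is_mat_inv d A (mat_inv d A)"
    by (rule is_mat_inv_if_det_nonzero[OF det_to_mat_nonzero_if_pos_def[OF ray lmin]])
  have vstar: "\<And>j. j < d \<Longrightarrow> (\<Sum>k<d. vstar k * A k j) = e1 j" "supvec d vstar"
    using mat_inv_first_column[OF sym inverse \<open>d \<ge> 1\<close>] unfolding vstar_def by auto
  have feasible: "clime_feasible d Sn lam vstar"
    using vstar close lam by (rule clime_feasible_if_close)
  hence vhat_feasible: "clime_feasible d Sn lam vhat" and shorter: "l1norm d vhat \<le> l1norm d vstar"
    using vhat unfolding clime_minimizer_def by auto
  have "lam \<ge> 0" using lam \<open>t \<ge> 0\<close> l1norm_nonneg[of d vstar] by (auto intro: order_trans[rotated])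
  define h where "h = (\<lambda>k. vhat k - vstar k)"
  define a where "a = (\<Sum>k\<in>S. \<bar>h k\<bar>)"
  have S: "S \<subseteq> {..<d}" unfolding S_def by auto
  have cone: "(\<Sum>k\<in>{..<d} - S. \<bar>h k\<bar>) \<le> a"
    unfolding a_def h_def using l1_error_cone[OF S _ shorter] S_def by auto
  have L: "l1norm d h \<le> 2 * a" using cone l1norm_split[OF S, of h] unfolding a_def by simp
  have "a \<ge> 0" unfolding a_def by (intro sum_nonneg) auto
  have "quad_form d A h \<le> 2 * lam * l1norm d h + t * (l1norm d h)\<^sup>2"
    using clime_feasible_diff_bound[OF feasible vhat_feasible] close unfolding h_def
    by (rule quad_form_le_of_close)
  also have "\<dots> \<le> 2 * lam * (2 * a) + t * (2 * a)\<^sup>2"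
    using L l1norm_nonneg[of d h] \<open>lam \<ge> 0\<close> \<open>t \<ge> 0\<close>
    by (intro add_mono mult_left_mono power_mono) auto
  finally have quad: "quad_form d A h \<le> 4 * lam * a + 4 * t * a\<^sup>2" by (simp add: power2_eq_square)
  have "a \<le> 4 * lam * real s / (\<kappa> * RE d A s 1)"
  proof (cases "s = 0")
    case True
    hence "S = {}" using s_def S finite_subset by fastforce
    thus ?thesis unfolding a_def using True by simp
  next
    case False
    have "supvec d h"
      using vhat_feasible vstar(2) unfolding h_def clime_feasible_def supvec_def by auto
    hence "RE d A s 1 * a\<^sup>2 \<le> real s * quad_form d A h"
      unfolding a_def using False \<open>d \<ge> 1\<close> cone s_def
      by (intro RE_l1_sq_le_quad_form[OF ray lmin S]) (auto simp: a_def)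
    also have "\<dots> \<le> real s * (4 * lam * a + 4 * t * a\<^sup>2)" using quad by (intro mult_left_mono) auto
    finally have "RE d A s 1 * a\<^sup>2 \<le> 4 * lam * a * real s + 4 * t * real s * a\<^sup>2"
      by (simp add: algebra_simps)
    moreover have RE: "lambda_min d A \<le> RE d A s 1"
      using False \<open>d \<ge> 1\<close> by (intro RE_ge[OF ray lmin]) auto
    moreover have "4 * t * real s \<le> (1 - \<kappa>) * RE d A s 1"
      using mult_left_mono[OF RE, of "1 - \<kappa>"] \<kappa> absorb by linarith
    ultimately show ?thesis
      using lmin \<kappa> \<open>a \<ge> 0\<close> \<open>lam \<ge> 0\<close> by (intro absorb_quadratic_term) auto
  qed
  thus "l1norm d (\<lambda>k. vhat k - vstar k) \<le> 8 * lam * real s / (\<kappa> * RE d A s 1)"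
    using L unfolding h_def by simp
  show "(\<Sum>k\<in>{..<d} - S. \<bar>vhat k - vstar k\<bar>) \<le> (\<Sum>k\<in>S. \<bar>vhat k - vstar k\<bar>)"
    using cone unfolding a_def h_def .
qed

text \<open>For K = 0 the sparsity hypothesis divides by zero and says nothing, but then t = 0.\<close>
lemma absorb_condition_of_sparsity:
  fixes A K r s \<kappa> \<mu> :: real
  assumes "A > 0" "0 \<le> (1 - \<kappa>) * \<mu>"
    and sparsity: "s * r \<le> (1 - \<kappa>) * \<mu> / ((1 + 1)\<^sup>2 * (4 * A * K\<^sup>2))"
  shows "4 * (4 * A * K\<^sup>2 * r) * s \<le> (1 - \<kappa>) * \<mu>"
proof (cases "K = 0")
  case True thus ?thesis using assms by simp
next
  case False
  hence "(1 + 1)\<^sup>2 * (4 * A * K\<^sup>2) > 0" using \<open>A > 0\<close> by simp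
  hence "s * r * ((1 + 1)\<^sup>2 * (4 * A * K\<^sup>2)) \<le> (1 - \<kappa>) * \<mu>"
    using sparsity by (simp add: pos_le_divide_eq)
  thus ?thesis by (simp add: algebra_simps)
qed

lemma max_norm_le_iff:
  "max_norm d D \<le> t \<longleftrightarrow> 0 \<le> t \<and> (\<forall>k<d. \<forall>l<d. \<bar>D k l\<bar> \<le> t)"
proof -
  have "finite {\<bar>D k l\<bar> | k l. k < d \<and> l < d}" by (rule finite_image_set2) auto
  hence "max_norm d D \<le> t \<longleftrightarrow> (\<forall>x\<in>{\<bar>D k l\<bar> | k l. k < d \<and> l < d} \<union> {0}. x \<le> t)"
    unfolding max_norm_def by (intro Max_le_iff) auto
  thus ?thesis by blast
qed

lemma sets_max_norm_sample_cov_le: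
  assumes "\<And>i j. i < n \<Longrightarrow> j < d \<Longrightarrow> X i j \<in> borel_measurable M" and "t \<ge> 0"
  shows "{\<omega> \<in> space M. max_norm d (\<lambda>k l. sample_cov n X \<omega> k l - B k l) \<le> t} \<in> sets M"
proof -
  have "{\<omega> \<in> space M. \<forall>k\<in>{..<d}. \<forall>l\<in>{..<d}. \<bar>sample_cov n X \<omega> k l - B k l\<bar> \<le> t} \<in> sets M"
  proof (intro sets.sets_Collect_finite_All finite_lessThan)
    fix k l assume kl: "k \<in> {..<d}" "l \<in> {..<d}"
    have "(\<lambda>\<omega>. sample_cov n X \<omega> k l) \<in> borel_measurable M"
      unfolding sample_cov_def
      by (intro borel_measurable_times borel_measurable_const borel_measurable_sum)
         (use kl in \<open>auto intro: assms\<close>)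
    hence "(\<lambda>\<omega>. \<bar>sample_cov n X \<omega> k l - B k l\<bar>) \<in> borel_measurable M" by measurable
    thus "{\<omega> \<in> space M. \<bar>sample_cov n X \<omega> k l - B k l\<bar> \<le> t} \<in> sets M" by measurable
  qed
  moreover have "{\<omega> \<in> space M. max_norm d (\<lambda>k l. sample_cov n X \<omega> k l - B k l) \<le> t}
      = {\<omega> \<in> space M. \<forall>k\<in>{..<d}. \<forall>l\<in>{..<d}. \<bar>sample_cov n X \<omega> k l - B k l\<bar> \<le> t}"
    using \<open>t \<ge> 0\<close> by (auto simp: max_norm_le_iff)
  ultimately show ?thesis by simp
qed

theorem lemma7:
  fixes M :: "'a measure" and n d :: nat
    and X :: "nat \<Rightarrow> nat \<Rightarrow> 'a \<Rightarrow> real"   \<comment> \<open>X i j: coordinate j of X_i, i < n\<close>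
    and Xg :: "nat \<Rightarrow> 'a \<Rightarrow> real"           \<comment> \<open>Xg j: coordinate j of X\<close>
    and K cbar A \<kappa> \<delta> lam' :: real
    and \<Sigma>X :: "nat \<Rightarrow> nat \<Rightarrow> real" and vstar :: "nat \<Rightarrow> real"
    and S :: "nat set" and s :: nat
  assumes "prob_space M"
    and "n \<ge> 1" and "d \<ge> 1"
    and meas_X: "\<And>i j. i < n \<Longrightarrow> j < d \<Longrightarrow> X i j \<in> borel_measurable M"
    and meas_Xg: "\<And>j. j < d \<Longrightarrow> Xg j \<in> borel_measurable M"
    and indep: "prob_space.indep_vars M (\<lambda>i. PiM {..<d} (\<lambda>_. borel))
                  (\<lambda>i \<omega>. restrict (\<lambda>j. X i j \<omega>) {..<d}) {..<n}"
    and ident: "\<And>i. i < n \<Longrightarrow>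
        distr M (PiM {..<d} (\<lambda>_. borel)) (\<lambda>\<omega>. restrict (\<lambda>j. X i j \<omega>) {..<d}) =
        distr M (PiM {..<d} (\<lambda>_. borel)) (\<lambda>\<omega>. restrict (\<lambda>j. Xg j \<omega>) {..<d})"
    and K_def: "ereal K = (SUP j\<in>{..<d}. psi2_norm M (Xg j))"
    and \<Sigma>X_def: "\<Sigma>X = (\<lambda>k l. if k < d \<and> l < d
                        then prob_space.expectation M (\<lambda>\<omega>. Xg k \<omega> * Xg l \<omega>) else 0)"
    and cbar: "\<And>A'. A' > 0 \<Longrightarrow> A' * sqrt (ln (real d) / real n) \<le> 1 \<Longrightarrow>
        measure M {\<omega> \<in> space M. max_norm d (\<lambda>k l. sample_cov n X \<omega> k l - \<Sigma>X k l)
                        > 4 * A' * K\<^sup>2 * sqrt (ln (real d) / real n)}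
          \<le> 2 * real d powr (2 - cbar * A'\<^sup>2)"
    and A_pos: "A > 0" and A_le: "A * sqrt (ln (real d) / real n) \<le> 1"
    and \<kappa>: "0 < \<kappa>" "\<kappa> < 1"
    and \<delta>: "lambda_min d \<Sigma>X > \<delta>" "\<delta> > 0"
    and vstar_def: "vstar = (\<lambda>k. mat_inv d \<Sigma>X k 0)"
    and S_def: "S = {k. k < d \<and> vstar k \<noteq> 0}"
    and s_def: "s = card S"
    and sparsity: "real s * sqrt (ln (real d) / real n)
        \<le> (1 - \<kappa>) * lambda_min d \<Sigma>X / ((1 + 1)\<^sup>2 * (4 * A * K\<^sup>2))"
    and lam: "lam' \<ge> l1norm d vstar * 4 * A * K\<^sup>2 * sqrt (ln (real d) / real n)"
  shows "\<exists>E \<in> sets M. measure M E \<ge> 1 - 2 * real d powr (2 - cbar * A\<^sup>2) \<and>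
     (\<forall>\<omega>\<in>E. \<forall>vhat. clime_minimizer d (sample_cov n X \<omega>) lam' vhat \<longrightarrow>
        l1norm d (\<lambda>k. vhat k - vstar k) \<le> 8 * lam' * real s / (\<kappa> * RE d \<Sigma>X s 1) \<and>
        (\<Sum>k\<in>{..<d} - S. \<bar>vhat k - vstar k\<bar>) \<le> (\<Sum>k\<in>S. \<bar>vhat k - vstar k\<bar>))"
proof -
  interpret prob_space M by fact
  define t where "t = 4 * A * K\<^sup>2 * sqrt (ln (real d) / real n)"
  define E where "E = {\<omega> \<in> space M. max_norm d (\<lambda>k l. sample_cov n X \<omega> k l - \<Sigma>X k l) \<le> t}"
  have "t \<ge> 0" unfolding t_def using A_pos \<open>d \<ge> 1\<close> by simp
  have E: "E \<in> sets M" unfolding E_def using meas_X \<open>t \<ge> 0\<close> by (rule sets_max_norm_sample_cov_le)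
  have "space M - E = {\<omega> \<in> space M. max_norm d (\<lambda>k l. sample_cov n X \<omega> k l - \<Sigma>X k l)
                        > 4 * A * K\<^sup>2 * sqrt (ln (real d) / real n)}"
    unfolding E_def t_def by auto
  hence "measure M (space M - E) \<le> 2 * real d powr (2 - cbar * A\<^sup>2)" using cbar[OF A_pos A_le] by simp
  hence prob_E: "measure M E \<ge> 1 - 2 * real d powr (2 - cbar * A\<^sup>2)" using prob_compl[OF E] by simp
  have sym: "\<And>k l. \<Sigma>X k l = \<Sigma>X l k" unfolding \<Sigma>X_def by (auto simp: mult.commute)
  have lmin: "lambda_min d \<Sigma>X > 0" using \<delta> by linarith
  have absorb: "4 * t * real s \<le> (1 - \<kappa>) * lambda_min d \<Sigma>X"
    unfolding t_def using A_pos \<kappa> lmin sparsity by (intro absorb_condition_of_sparsity) auto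
  have lam_t: "lam' \<ge> l1norm d vstar * t" using lam unfolding t_def by (simp add: algebra_simps)
  show ?thesis
  proof (intro bexI[OF _ E] conjI prob_E ballI allI impI)
    fix \<omega> vhat assume "\<omega> \<in> E" and vhat: "clime_minimizer d (sample_cov n X \<omega>) lam' vhat"
    hence "\<And>k l. k < d \<Longrightarrow> l < d \<Longrightarrow> \<bar>sample_cov n X \<omega> k l - \<Sigma>X k l\<bar> \<le> t"
      by (auto simp: E_def max_norm_le_iff)
    note bound = clime_error_bound[OF sym \<open>d \<ge> 1\<close> lmin vstar_def S_def s_def this \<open>t \<ge> 0\<close>
        absorb \<kappa> lam_t vhat]
    show "l1norm d (\<lambda>k. vhat k - vstar k) \<le> 8 * lam' * real s / (\<kappa> * RE d \<Sigma>X s 1)"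
      by (rule bound(1))
    show "(\<Sum>k\<in>{..<d} - S. \<bar>vhat k - vstar k\<bar>) \<le> (\<Sum>k\<in>S. \<bar>vhat k - vstar k\<bar>)"
      by (rule bound(2))
  qed
qed

end
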